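(* Let $H$ be a complex Hilbert space and $\{\mathcal{U}(t)\}_{t\geq 0}$ a strongly continuous semigroup on $H$ with generator $\mathcal{L}$. Let $z\in D(\mathcal{L})\cap D(\mathcal{L}^\dagger)$ with $z\neq0$, $\mathcal{P}:=(\cdot,z)(z,z)^{-1}z$, $\mathcal{Q}:=1-\mathcal{P}$. Let $K:\mathbb{R}_+\to\mathbb{C}$ be the unique continuous solution of $$K(t)=(\mathcal{U}(t)\mathcal{QL}z,\mathcal{Q}\mathcal{L}^\dagger z)(z,z)^{-1}-\int_0^tK(t-s)\,(\mathcal{U}(s)z,\mathcal{Q}\mathcal{L}^\dagger z)(z,z)^{-1}\,ds,$$ let $\eta_t:=\mathcal{U}(t)\mathcal{QL}z-\int_0^tK(t-s)\,\mathcal{U}(s)z\,ds$, and let $\{\mathcal{G}(t)\}_{t\ge0}$ be the strongly continuous semigroup generated by $\overline{\mathcal{QL}}\mathcal{Q}$. Then for all $t\ge0$: $\eta_t=\mathcal{G}(t)\mathcal{QL}z$, and $\int_0^t\eta_s\,ds\in D(\overline{\mathcal{QL}}\mathcal{Q})$ with $\eta_t=\eta_0+\overline{\mathcal{QL}}\mathcal{Q}\int_0^t\eta_s\,ds$.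
   Context: The scalar product $(\cdot,\cdot)$ on $H$ is conjugate-linear in its second argument. The generator is $\mathcal{L}x:=\lim_{h\searrow 0}\frac1h[\mathcal{U}(h)x-x]$ on the set $D(\mathcal{L})$ where the limit exists; $\dagger$ denotes the adjoint, the overbar the closure; $D(\overline{\mathcal{QL}}\mathcal{Q})=\{x:\mathcal{Q}x\in D(\overline{\mathcal{QL}})\}$. Integrals are Bochner integrals. *)

theory Defs
  imports "HOL-Analysis.Analysis"
begin

text \<open>A complex Hilbert space: a Banach space (over the reals) carrying a complex
scalar multiplication compatible with the real one, and a complex inner product
which is linear in the first and conjugate-linear in the second argument and
induces the norm.\<close>

class chilbert = banach +
  fixes cscale :: "complex \<Rightarrow> 'a \<Rightarrow> 'a"
    and cinner :: "'a \<Rightarrow> 'a \<Rightarrow> complex"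
  assumes cscale_of_real: "cscale (complex_of_real r) x = r *\<^sub>R x"
    and cscale_add_right: "cscale a (x + y) = cscale a x + cscale a y"
    and cscale_add_left: "cscale (a + b) x = cscale a x + cscale b x"
    and cscale_cscale: "cscale a (cscale b x) = cscale (a * b) x"
    and cscale_one: "cscale 1 x = x"
    and cinner_add_left: "cinner (x + y) w = cinner x w + cinner y w"
    and cinner_cscale_left: "cinner (cscale a x) w = a * cinner x w"
    and cinner_commute: "cinner y x = cnj (cinner x y)"
    and cinner_self_norm: "cinner x x = complex_of_real ((norm x)\<^sup>2)"

definition bounded_clinear_op :: "('a::chilbert \<Rightarrow> 'a) \<Rightarrow> bool" where
  "bounded_clinear_op T \<longleftrightarrow>
     (\<forall>x y. T (x + y) = T x + T y) \<and> (\<forall>a x. T (cscale a x) = cscale a (T x)) \<and>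
     (\<exists>C. \<forall>x. norm (T x) \<le> C * norm x)"

definition c0_semigroup :: "(real \<Rightarrow> 'a::chilbert \<Rightarrow> 'a) \<Rightarrow> bool" where
  "c0_semigroup U \<longleftrightarrow>
     (\<forall>t\<ge>0. bounded_clinear_op (U t)) \<and> U 0 = id \<and>
     (\<forall>s\<ge>0. \<forall>t\<ge>0. U (s + t) = U s \<circ> U t) \<and>
     (\<forall>x. ((\<lambda>t. U t x) \<longlongrightarrow> x) (at_right 0))"

definition gen_dom :: "(real \<Rightarrow> 'a::chilbert \<Rightarrow> 'a) \<Rightarrow> 'a set" where
  "gen_dom U = {x. \<exists>y. ((\<lambda>h. (1 / h) *\<^sub>R (U h x - x)) \<longlongrightarrow> y) (at_right 0)}"

definition gen :: "(real \<Rightarrow> 'a::chilbert \<Rightarrow> 'a) \<Rightarrow> 'a \<Rightarrow> 'a" where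
  "gen U x = Lim (at_right 0) (\<lambda>h. (1 / h) *\<^sub>R (U h x - x))"

definition adj_dom :: "'a set \<Rightarrow> ('a::chilbert \<Rightarrow> 'a) \<Rightarrow> 'a set" where
  "adj_dom D T = {y. \<exists>w. \<forall>x\<in>D. cinner (T x) y = cinner x w}"

definition adj :: "'a set \<Rightarrow> ('a::chilbert \<Rightarrow> 'a) \<Rightarrow> 'a \<Rightarrow> 'a" where
  "adj D T y = (THE w. \<forall>x\<in>D. cinner (T x) y = cinner x w)"

definition cl_graph :: "'a set \<Rightarrow> ('a::chilbert \<Rightarrow> 'a) \<Rightarrow> ('a \<times> 'a) set" where
  "cl_graph D T = closure {(x, T x) | x. x \<in> D}"

definition cl_dom :: "'a set \<Rightarrow> ('a::chilbert \<Rightarrow> 'a) \<Rightarrow> 'a set" where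
  "cl_dom D T = {x. \<exists>y. (x, y) \<in> cl_graph D T}"

definition cl_op :: "'a set \<Rightarrow> ('a::chilbert \<Rightarrow> 'a) \<Rightarrow> 'a \<Rightarrow> 'a" where
  "cl_op D T x = (THE y. (x, y) \<in> cl_graph D T)"

definition projP :: "'a::chilbert \<Rightarrow> 'a \<Rightarrow> 'a" where
  "projP z x = cscale (cinner x z / cinner z z) z"

definition projQ :: "'a::chilbert \<Rightarrow> 'a \<Rightarrow> 'a" where
  "projQ z x = x - projP z x"

end

(* Because z lies in the domain of the adjoint, Q L = L - (., L^dagger z)(z,z)^-1 z on D(L)
   differs from the closed generator L by a bounded rank-one operator, so it is closed. Hence
   the generator of G is Q L Q with domain D(L), and G leaves the orthogonal complement of z
   invariant. For x orthogonal to z, Duhamel's formula comparing U with G reads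

     U(t)x - G(t)x = int_0^t (G(s)x, L^dagger z)(z,z)^-1 U(t-s)z ds.

   Taking x = Q L z and pairing with Q L^dagger z shows that k(t) = (G(t)QLz, L^dagger z)(z,z)^-1
   solves the Volterra equation defining K. Continuous solutions of such equations are unique,
   so K = k and eta_t = G(t)QLz; the remaining claims are the identity
   G(t)w - w = A int_0^t G(s) w ds for the generator A of G. *)

theory Submission
  imports Defs
begin

section \<open>The complex inner product\<close>

lemma cinner_diff_left: "cinner (x - y) w = cinner x w - cinner y w"
  using cinner_add_left[of "x - y" y w] by simp

lemma cnj_cinner: "cnj (cinner x y) = cinner y x"
  by (simp add: cinner_commute[of y x])

lemma cinner_add_right: "cinner x (y + w) = cinner x y + cinner x w"
  using cinner_commute[of x "y + w"] by (simp add: cinner_add_left cnj_cinner)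

lemma cinner_diff_right: "cinner x (y - w) = cinner x y - cinner x w"
  using cinner_add_right[of x "y - w" w] by simp

lemma cinner_cscale_right: "cinner x (cscale a y) = cnj a * cinner x y"
  using cinner_commute[of x "cscale a y"] by (simp add: cinner_cscale_left cnj_cinner)

lemma cinner_self_eq_0 [simp]: "cinner x x = 0 \<longleftrightarrow> x = 0"
  by (simp add: cinner_self_norm)

lemma cscale_scaleR_right: "cscale a (r *\<^sub>R x) = r *\<^sub>R cscale a x"
  by (metis cscale_cscale cscale_of_real mult.commute)

lemma cscale_scaleR_left: "cscale (r *\<^sub>R a) x = r *\<^sub>R cscale a x"
  by (metis cscale_cscale cscale_of_real scaleR_conv_of_real)

lemma norm_cscale: "norm (cscale a x) = cmod a * norm x"
proof -
  have "complex_of_real ((norm (cscale a x))\<^sup>2) = a * cnj a * cinner x x"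
    using cinner_self_norm[of "cscale a x"] by (simp add: cinner_cscale_left cinner_cscale_right mult_ac)
  also have "\<dots> = complex_of_real ((cmod a * norm x)\<^sup>2)"
    by (simp add: cinner_self_norm complex_norm_square[symmetric] power_mult_distrib)
  finally show ?thesis
    by (simp add: power2_eq_iff_nonneg del: of_real_power)
qed

lemma cmod_cinner_le: "cmod (cinner x y) \<le> norm x * norm y"
proof (cases "y = 0")
  case True
  then show ?thesis
    using cinner_diff_right[of x 0 0] by simp
next
  case False
  define a where "a = cinner x y"
  define N where "N = (norm y)\<^sup>2"
  have N: "N > 0" using False by (simp add: N_def)
  define l where "l = a / complex_of_real N"
  \<comment> \<open>Expand \<open>0 \<le> \<parallel>x - l y\<parallel>\<^sup>2\<close> with \<open>l\<close> the Fourier coefficient of \<open>x\<close> along \<open>y\<close>.\<close>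
  have "complex_of_real ((norm (x - cscale l y))\<^sup>2)
      = cinner x x - cnj l * a - l * cnj a + l * cnj l * complex_of_real N"
    using cinner_self_norm[of "x - cscale l y"] cinner_self_norm[of y]
    by (simp add: cinner_diff_left cinner_diff_right cinner_cscale_left
        cinner_cscale_right a_def N_def cnj_cinner algebra_simps)
  also have "\<dots> = complex_of_real ((norm x)\<^sup>2 - (cmod a)\<^sup>2 / N)"
    using N by (simp add: l_def cinner_self_norm complex_norm_square[symmetric] field_simps)
  finally have "(norm (x - cscale l y))\<^sup>2 = (norm x)\<^sup>2 - (cmod a)\<^sup>2 / N"
    by (simp only: of_real_eq_iff)
  then have "(cmod a)\<^sup>2 \<le> (norm x * norm y)\<^sup>2"
    using N by (simp add: N_def power_mult_distrib field_simps)
      (metis le_add_same_cancel1 mult_nonneg_nonneg zero_le_power2)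
  then show ?thesis
    unfolding a_def by (rule power2_le_imp_le) simp
qed

interpretation cinner: bounded_bilinear "cinner :: 'a::chilbert \<Rightarrow> 'a \<Rightarrow> complex"
proof
  show "cinner (r *\<^sub>R a) b = r *\<^sub>R cinner a b" for r and a b :: 'a
    using cinner_cscale_left[of "complex_of_real r" a b] by (simp add: cscale_of_real scaleR_conv_of_real)
  show "cinner a (r *\<^sub>R b) = r *\<^sub>R cinner a b" for r and a b :: 'a
    using cinner_cscale_right[of a "complex_of_real r" b] by (simp add: cscale_of_real scaleR_conv_of_real)
  show "\<exists>K. \<forall>a b :: 'a. norm (cinner a b) \<le> norm a * norm b * K"
    using cmod_cinner_le by (intro exI[of _ 1]) auto
qed (simp_all add: cinner_add_left cinner_add_right)

interpretation cscale: bounded_bilinear "cscale :: complex \<Rightarrow> 'a::chilbert \<Rightarrow> 'a"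
  by standard (auto simp: cscale_add_left cscale_add_right cscale_scaleR_left cscale_scaleR_right
      norm_cscale intro!: exI[of _ 1])

section \<open>Calculus and functional analysis\<close>

lemma has_vector_derivative_iff:
  "(f has_vector_derivative f') (at x within S) \<longleftrightarrow>
    ((\<lambda>y. (1 / (y - x)) *\<^sub>R (f y - f x)) \<longlongrightarrow> f') (at x within S)"
proof -
  have "norm ((1 / norm (y - x)) *\<^sub>R (f y - (f x + (y - x) *\<^sub>R f')))
      = norm ((1 / (y - x)) *\<^sub>R (f y - f x) - f')" if "y \<noteq> x" for y
  proof -
    have "(1 / (y - x)) *\<^sub>R (f y - f x) - f' = (1 / (y - x)) *\<^sub>R (f y - (f x + (y - x) *\<^sub>R f'))"
      using that by (simp add: scaleR_diff_right scaleR_add_right)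
    then show ?thesis by simp
  qed
  then have "((\<lambda>y. (1 / norm (y - x)) *\<^sub>R (f y - (f x + (y - x) *\<^sub>R f'))) \<longlongrightarrow> 0) (at x within S)
      \<longleftrightarrow> ((\<lambda>y. (1 / (y - x)) *\<^sub>R (f y - f x) - f') \<longlongrightarrow> 0) (at x within S)"
    by (subst (1 2) tendsto_norm_zero_iff[symmetric]) (intro Lim_cong_within, auto)
  then show ?thesis
    unfolding has_vector_derivative_def has_derivative_within
    by (simp add: bounded_linear_scaleR_left LIM_zero_iff)
qed

lemma tendsto_apply_bounded_family:
  fixes T :: "'c \<Rightarrow> 'a::real_normed_vector \<Rightarrow> 'b::real_normed_vector"
  assumes lin: "eventually (\<lambda>r. linear (T r)) F"
    and bnd: "eventually (\<lambda>r. \<forall>y. norm (T r y) \<le> M * norm y) F"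
    and Tc: "((\<lambda>r. T r c) \<longlongrightarrow> l) F"
    and q: "(q \<longlongrightarrow> c) F"
  shows "((\<lambda>r. T r (q r)) \<longlongrightarrow> l) F"
proof -
  have "((\<lambda>r. T r (q r - c)) \<longlongrightarrow> 0) F"
  proof (rule Lim_null_comparison)
    show "eventually (\<lambda>r. norm (T r (q r - c)) \<le> M * norm (q r - c)) F"
      using bnd by eventually_elim blast
    show "((\<lambda>r. M * norm (q r - c)) \<longlongrightarrow> 0) F"
      using q by (intro tendsto_mult_right_zero tendsto_norm_zero LIM_zero)
  qed
  then have "((\<lambda>r. T r (q r - c) + T r c) \<longlongrightarrow> l) F"
    using tendsto_add[OF _ Tc] by fastforce
  moreover have "eventually (\<lambda>r. T r (q r - c) + T r c = T r (q r)) F"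
    using lin by eventually_elim (simp add: linear_diff)
  ultimately show ?thesis
    by (rule Lim_transform_eventually)
qed

lemma has_vector_derivative_apply_family:
  fixes T :: "real \<Rightarrow> 'a::real_normed_vector \<Rightarrow> 'b::real_normed_vector"
  assumes lin: "\<And>r. r \<in> S \<Longrightarrow> linear (T r)"
    and bnd: "\<And>r y. r \<in> S \<Longrightarrow> norm (T r y) \<le> M * norm y"
    and cont: "((\<lambda>r. T r g') \<longlongrightarrow> T s g') (at s within S)"
    and dT: "((\<lambda>r. T r (g s)) has_vector_derivative d) (at s within S)"
    and dg: "(g has_vector_derivative g') (at s within S)"
  shows "((\<lambda>r. T r (g r)) has_vector_derivative T s g' + d) (at s within S)"
  unfolding has_vector_derivative_iff
proof (rule Lim_transform_eventually)
  have "((\<lambda>r. T r ((1 / (r - s)) *\<^sub>R (g r - g s))) \<longlongrightarrow> T s g') (at s within S)"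
  proof (rule tendsto_apply_bounded_family[where T = T and M = M and c = g'])
    show "eventually (\<lambda>r. linear (T r)) (at s within S)"
      by (simp add: eventually_at_filter lin)
    show "eventually (\<lambda>r. \<forall>y. norm (T r y) \<le> M * norm y) (at s within S)"
      by (simp add: eventually_at_filter bnd)
  qed (use cont dg in \<open>simp_all add: has_vector_derivative_iff\<close>)
  then show "((\<lambda>r. T r ((1 / (r - s)) *\<^sub>R (g r - g s)) + (1 / (r - s)) *\<^sub>R (T r (g s) - T s (g s)))
      \<longlongrightarrow> T s g' + d) (at s within S)"
    using dT unfolding has_vector_derivative_iff by (rule tendsto_add)
  show "eventually (\<lambda>r. T r ((1 / (r - s)) *\<^sub>R (g r - g s)) + (1 / (r - s)) *\<^sub>R (T r (g s) - T s (g s))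
      = (1 / (r - s)) *\<^sub>R (T r (g r) - T s (g s))) (at s within S)"
    unfolding eventually_at_filter
    by (intro always_eventually allI impI) (simp add: lin linear_diff linear_scale scaleR_diff_right)
qed

lemma tendsto_integral_average:
  fixes f :: "real \<Rightarrow> 'a::banach"
  assumes "continuous_on {t..b} f" "t < b"
  shows "((\<lambda>h. (1 / h) *\<^sub>R integral {t..t + h} f) \<longlongrightarrow> f t) (at_right 0)"
proof -
  have "((\<lambda>u. integral {t..u} f) has_vector_derivative f t) (at t within {t..b})"
    using assms by (intro integral_has_vector_derivative) auto
  then have "((\<lambda>u. (1 / (u - t)) *\<^sub>R integral {t..u} f) \<longlongrightarrow> f t) (at_right t)"
    using assms(2) by (simp add: has_vector_derivative_iff at_within_Icc_at_right)
  then have "((\<lambda>h. (1 / (h + t - t)) *\<^sub>R integral {t..h + t} f) \<longlongrightarrow> f t) (at_right 0)"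
    by (subst (asm) filterlim_at_right_to_0) simp
  then show ?thesis
    by (subst add.commute) simp
qed

lemma integral_Icc_reflect:
  fixes h :: "real \<Rightarrow> 'a::banach"
  shows "integral {0..t} (\<lambda>s. h (t - s)) = integral {0..t} h"
proof -
  have "integral {0..t} (\<lambda>s. h (t - s)) = integral {-t..0} (\<lambda>u. h (- u))"
    using integral_shift_Icc_real[of "-t" 0 "\<lambda>s. h (t - s)" t] by (simp add: o_def)
  also have "\<dots> = integral {0..t} h"
    using Henstock_Kurzweil_Integration.integral_reflect_real[of t 0 h] by simp
  finally show ?thesis .
qed

lemma filterlim_abs_diff_at_right:
  "filterlim (\<lambda>r. \<bar>r - t\<bar>) (at_right 0) (at (t::real) within X)"
proof -
  have "((\<lambda>r. \<bar>r - t\<bar>) \<longlongrightarrow> \<bar>t - t\<bar>) (at t within X)"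
    by (intro tendsto_intros)
  moreover have "eventually (\<lambda>r. \<bar>r - t\<bar> \<in> {0<..}) (at t within X)"
    by (simp add: eventually_at_filter)
  ultimately show ?thesis
    unfolding filterlim_at by (auto elim: eventually_mono)
qed

lemma tendsto_integral_apply_family:
  fixes T :: "real \<Rightarrow> 'a::real_normed_vector \<Rightarrow> 'b::banach"
  assumes lin: "\<And>s. s \<in> {a..b} \<Longrightarrow> linear (T s)"
    and bnd: "\<And>s y. s \<in> {a..b} \<Longrightarrow> norm (T s y) \<le> M * norm y"
    and cont: "\<And>y. continuous_on {a..b} (\<lambda>s. T s y)"
    and q: "(q \<longlongrightarrow> c) F"
    and ab: "a \<le> b"
  shows "((\<lambda>n. integral {a..b} (\<lambda>s. T s (q n))) \<longlongrightarrow> integral {a..b} (\<lambda>s. T s c)) F"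
proof -
  have "integral {a..b} (\<lambda>s. T s (q n)) - integral {a..b} (\<lambda>s. T s c)
      = integral {a..b} (\<lambda>s. T s (q n - c))" for n
  proof -
    have "integral {a..b} (\<lambda>s. T s (q n)) - integral {a..b} (\<lambda>s. T s c)
        = integral {a..b} (\<lambda>s. T s (q n) - T s c)"
      using cont by (intro integral_diff[symmetric] integrable_continuous_real)
    also have "\<dots> = integral {a..b} (\<lambda>s. T s (q n - c))"
      using lin by (intro integral_cong) (simp add: linear_diff)
    finally show ?thesis .
  qed
  moreover have "((\<lambda>n. integral {a..b} (\<lambda>s. T s (q n - c))) \<longlongrightarrow> 0) F"
  proof (rule Lim_null_comparison)
    have "norm (integral {a..b} (\<lambda>s. T s (q n - c))) \<le> M * norm (q n - c) * (b - a)" for n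
      using ab cont bnd by (intro integral_bound) auto
    then show "eventually (\<lambda>n. norm (integral {a..b} (\<lambda>s. T s (q n - c))) \<le> M * norm (q n - c) * (b - a)) F"
      by simp
    show "((\<lambda>n. M * norm (q n - c) * (b - a)) \<longlongrightarrow> 0) F"
      using q by (intro tendsto_mult_left_zero tendsto_mult_right_zero tendsto_norm_zero LIM_zero)
  qed
  ultimately have "((\<lambda>n. integral {a..b} (\<lambda>s. T s (q n)) - integral {a..b} (\<lambda>s. T s c)) \<longlongrightarrow> 0) F"
    by simp
  then show ?thesis
    by (rule LIM_zero_cancel)
qed

lemma linear_norm_le_of_bounded_on_ball:
  fixes T :: "'a::real_normed_vector \<Rightarrow> 'b::real_normed_vector"
  assumes lin: "linear T" and r: "r > 0" and bnd: "\<And>y. y \<in> ball x0 r \<Longrightarrow> norm (T y) \<le> k"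
  shows "norm (T x) \<le> 4 * k / r * norm x"
proof (cases "x = 0")
  case True
  then show ?thesis
    using lin by (simp add: linear_0)
next
  case False
  define c where "c = r / (2 * norm x)"
  have c: "c > 0"
    using False r by (simp add: c_def)
  have "x0 + c *\<^sub>R x \<in> ball x0 r" "x0 \<in> ball x0 r"
    using False r by (simp_all add: c_def dist_norm)
  then have "norm (T (x0 + c *\<^sub>R x)) \<le> k" "norm (T x0) \<le> k"
    using bnd by blast+
  moreover have "c * norm (T x) = norm (T (x0 + c *\<^sub>R x) - T x0)"
    using c lin by (simp add: linear_add linear_scale)
  ultimately have "c * norm (T x) \<le> 2 * k"
    using norm_triangle_ineq4[of "T (x0 + c *\<^sub>R x)" "T x0"] by linarith
  then have "norm (T x) \<le> 2 * k / c"
    using c by (simp add: field_simps)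
  also have "\<dots> = 4 * k / r * norm x"
    using False r by (simp add: c_def field_simps)
  finally show ?thesis .
qed

lemma uniform_boundedness:
  fixes T :: "'i \<Rightarrow> 'a::banach \<Rightarrow> 'b::real_normed_vector"
  assumes lin: "\<And>i. bounded_linear (T i)"
    and pointwise: "\<And>x. \<exists>B. \<forall>i. norm (T i x) \<le> B"
  shows "\<exists>M. \<forall>i x. norm (T i x) \<le> M * norm x"
proof -
  define F where "F k = {x. \<forall>i. norm (T i x) \<le> real k}" for k :: nat
  have closed_F: "closed (F k)" for k
  proof -
    have "F k = (\<Inter>i. {x. norm (T i x) \<le> real k})" by (auto simp: F_def)
    moreover have "closed {x. norm (T i x) \<le> real k}" for i
      by (intro closed_Collect_le continuous_intros linear_continuous_on lin)
    ultimately show ?thesis by auto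
  qed
  have "\<exists>k. x \<in> F k" for x
  proof -
    obtain B where B: "\<forall>i. norm (T i x) \<le> B" using pointwise by blast
    obtain k :: nat where "B \<le> real k" using real_nat_ceiling_ge by blast
    then have "x \<in> F k" using B by (auto simp: F_def intro: order_trans)
    then show ?thesis by blast
  qed
  then have covers: "(\<Union>k. F k) = UNIV" by blast
  have "\<exists>k. interior (F k) \<noteq> {}"
  proof (rule ccontr)
    assume "\<not> ?thesis"
    then have "\<forall>A\<in>range F. closedin euclidean A \<and> euclidean interior_of A = {}"
      using closed_F closed_closedin by auto
    then have "euclidean interior_of (\<Union>(range F)) = {}"
      by (intro Baire_category_alt) (auto simp: completely_metrizable_space_euclidean)
    then show False
      unfolding covers by simp
  qed
  then obtain k x0 where "x0 \<in> interior (F k)"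
    by blast
  then obtain r where r: "r > 0" "ball x0 r \<subseteq> F k"
    using mem_interior by blast
  have "norm (T i x) \<le> 4 * real k / r * norm x" for i x
    using r lin[of i] by (intro linear_norm_le_of_bounded_on_ball[of _ r x0]) (auto simp: F_def bounded_linear.linear)
  then show ?thesis
    by blast
qed

lemma integral_Icc_power:
  assumes "t \<ge> 0"
  shows "integral {0..t} (\<lambda>s::real. s ^ n) = t ^ Suc n / real (Suc n)"
proof -
  have "((\<lambda>s::real. s ^ Suc n / real (Suc n)) has_real_derivative s ^ n) (at s within {0..t})" for s
    using DERIV_cdivide[OF DERIV_pow[of "Suc n" s], of "real (Suc n)"] by (simp del: of_nat_Suc)
  then have "((\<lambda>s::real. s ^ n) has_integral (t ^ Suc n / real (Suc n) - 0 ^ Suc n / real (Suc n))) {0..t}"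
    using assms by (intro fundamental_theorem_of_calculus) (auto simp: has_real_derivative_iff_has_vector_derivative)
  then show ?thesis by (simp add: integral_unique)
qed

lemma Volterra_convolution_iterate:
  fixes d f :: "real \<Rightarrow> 'a::{real_normed_algebra,banach}"
  assumes cont_d: "continuous_on {0..T} d" and cont_f: "continuous_on {0..T} f"
    and eq: "\<And>t. t \<in> {0..T} \<Longrightarrow> d t = integral {0..t} (\<lambda>s. d (t - s) * f s)"
    and Bd: "Bd \<ge> 0" "\<And>t. t \<in> {0..T} \<Longrightarrow> norm (d t) \<le> Bd"
    and Bf: "Bf \<ge> 0" "\<And>t. t \<in> {0..T} \<Longrightarrow> norm (f t) \<le> Bf"
  shows "\<forall>t\<in>{0..T}. norm (d t) \<le> Bd * (Bf * t) ^ n / fact n"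
proof (induction n)
  case 0
  then show ?case using Bd by simp
next
  case (Suc n)
  show ?case
  proof
    fix t assume t: "t \<in> {0..T}"
    have "continuous_on {0..t} (\<lambda>s. d (t - s) * f s)"
      using t by (intro continuous_intros continuous_on_compose2[OF cont_d]
          continuous_on_subset[OF cont_f]) auto
    then have "norm (d t) \<le> integral {0..t} (\<lambda>s. Bd * (Bf * (t - s)) ^ n / fact n * Bf)"
      unfolding eq[OF t]
    proof (rule integral_norm_bound_integral[OF integrable_continuous_real])
      fix s assume s: "s \<in> {0..t}"
      have "norm (d (t - s) * f s) \<le> norm (d (t - s)) * norm (f s)"
        by (rule norm_mult_ineq)
      also have "\<dots> \<le> Bd * (Bf * (t - s)) ^ n / fact n * Bf"
        using Suc.IH s t Bf(2)[of s] Bd(1) Bf(1) by (intro mult_mono) auto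
      finally show "norm (d (t - s) * f s) \<le> Bd * (Bf * (t - s)) ^ n / fact n * Bf" .
    qed (auto intro!: integrable_continuous_real continuous_intros)
    also have "\<dots> = integral {0..t} (\<lambda>s. Bd * (Bf * s) ^ n / fact n * Bf)"
      by (rule integral_Icc_reflect)
    also have "\<dots> = Bd * Bf ^ n / fact n * Bf * (t ^ Suc n / real (Suc n))"
      using t by (simp add: power_mult_distrib mult_ac integral_Icc_power)
    also have "\<dots> = Bd * (Bf * t) ^ Suc n / fact (Suc n)"
      by (simp add: power_mult_distrib field_simps del: of_nat_Suc)
    finally show "norm (d t) \<le> Bd * (Bf * t) ^ Suc n / fact (Suc n)" .
  qed
qed

lemma Volterra_convolution_eq_0:
  fixes d f :: "real \<Rightarrow> 'a::{real_normed_algebra,banach}"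
  assumes cont_d: "continuous_on {0..T} d" and cont_f: "continuous_on {0..T} f"
    and eq: "\<And>t. t \<in> {0..T} \<Longrightarrow> d t = integral {0..t} (\<lambda>s. d (t - s) * f s)"
    and t: "t \<in> {0..T}"
  shows "d t = 0"
proof -
  obtain Bd where Bd: "Bd \<ge> 0" "\<And>t. t \<in> {0..T} \<Longrightarrow> norm (d t) \<le> Bd"
    using compact_imp_bounded[OF compact_continuous_image[OF cont_d compact_Icc]]
    by (metis bounded_pos image_eqI less_eq_real_def)
  obtain Bf where Bf: "Bf \<ge> 0" "\<And>t. t \<in> {0..T} \<Longrightarrow> norm (f t) \<le> Bf"
    using compact_imp_bounded[OF compact_continuous_image[OF cont_f compact_Icc]]
    by (metis bounded_pos image_eqI less_eq_real_def)
  have "(\<lambda>n. Bd * (inverse (fact n) * (Bf * t) ^ n)) \<longlonglongrightarrow> 0"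
    by (intro tendsto_mult_right_zero summable_LIMSEQ_zero[OF summable_exp])
  moreover have "norm (d t) \<le> Bd * (inverse (fact n) * (Bf * t) ^ n)" for n
  proof -
    have "norm (d t) \<le> Bd * (Bf * t) ^ n / fact n"
      using Volterra_convolution_iterate[OF cont_d cont_f eq Bd Bf] t by blast
    also have "\<dots> = Bd * (inverse (fact n) * (Bf * t) ^ n)"
      by (simp add: field_simps)
    finally show ?thesis .
  qed
  ultimately have "norm (d t) \<le> 0"
    by (intro LIMSEQ_le_const) auto
  then show ?thesis by simp
qed

section \<open>Closed operators, adjoints and the projections \<open>P\<close>, \<open>Q\<close>\<close>

lemma
  assumes "closed {(x, T x) | x. x \<in> D}"
  shows cl_dom_closed_graph: "cl_dom D T = D"
    and cl_op_closed_graph: "x \<in> D \<Longrightarrow> cl_op D T x = T x"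
  using assms by (auto simp: cl_dom_def cl_op_def cl_graph_def)

lemma cinner_adj:
  assumes dense: "closure D = UNIV" and z: "z \<in> adj_dom D T" and x: "x \<in> D"
  shows "cinner (T x) z = cinner x (adj D T z)"
proof -
  obtain w where w: "\<forall>x\<in>D. cinner (T x) z = cinner x w"
    using z by (auto simp: adj_dom_def)
  have unique: "w' = w" if w': "\<forall>x\<in>D. cinner (T x) z = cinner x w'" for w'
  proof -
    have "cinner v (w' - w) = 0" for v
    proof (rule continuous_constant_on_closure[where f = "\<lambda>v. cinner v (w' - w)" and S = D])
      show "continuous_on (closure D) (\<lambda>v. cinner v (w' - w))"
        by (intro cinner.continuous_on continuous_intros)
      show "cinner y (w' - w) = 0" if "y \<in> D" for y
        using w w' that by (simp add: cinner_diff_right)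
    qed (simp add: dense)
    then show ?thesis
      using cinner_self_eq_0[of "w' - w"] by simp
  qed
  have "adj D T z = w"
    unfolding adj_def using w unique by (rule the_equality)
  then show ?thesis
    using w x by simp
qed

lemma cinner_projQ_left:
  assumes "z \<noteq> 0"
  shows "cinner (projQ z x) z = 0"
  using assms by (simp add: projQ_def projP_def cinner_diff_left cinner_cscale_left)

lemma projQ_eq_self: "cinner y z = 0 \<Longrightarrow> projQ z y = y"
  by (simp add: projQ_def projP_def cscale.zero_left)

lemma cinner_projQ_right: "cinner y z = 0 \<Longrightarrow> cinner y (projQ z v) = cinner y v"
  by (simp add: projQ_def projP_def cinner_diff_right cinner_cscale_right)

section \<open>Strongly continuous semigroups\<close>

locale strongly_continuous_semigroup =
  fixes S :: "real \<Rightarrow> 'a::chilbert \<Rightarrow> 'a"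
  assumes c0: "c0_semigroup S"
begin

lemma bounded_linear_S: "t \<ge> 0 \<Longrightarrow> bounded_linear (S t)"
proof -
  assume t: "t \<ge> 0"
  then obtain C where add: "\<forall>x y. S t (x + y) = S t x + S t y"
    and cs: "\<forall>a x. S t (cscale a x) = cscale a (S t x)" and C: "\<forall>x. norm (S t x) \<le> C * norm x"
    using c0 by (auto simp: c0_semigroup_def bounded_clinear_op_def)
  show ?thesis
  proof (rule bounded_linear_intro[where K = C])
    show "S t (r *\<^sub>R x) = r *\<^sub>R S t x" for r x
      using cs[rule_format, of "complex_of_real r" x] by (simp add: cscale_of_real)
  qed (use add C in \<open>auto simp: mult.commute\<close>)
qed

lemma linear_S: "t \<ge> 0 \<Longrightarrow> linear (S t)"
  using bounded_linear_S bounded_linear.linear by blast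

lemma S_cscale: "t \<ge> 0 \<Longrightarrow> S t (cscale a x) = cscale a (S t x)"
  using c0 by (simp add: c0_semigroup_def bounded_clinear_op_def)

lemma S_0 [simp]: "S 0 x = x"
  using c0 by (simp add: c0_semigroup_def)

lemma S_add: "s \<ge> 0 \<Longrightarrow> t \<ge> 0 \<Longrightarrow> S (s + t) x = S s (S t x)"
  using c0 by (simp add: c0_semigroup_def)

lemma S_diff: "t \<ge> 0 \<Longrightarrow> S t (x - y) = S t x - S t y"
  using linear_S by (simp add: linear_diff)

lemma tendsto_S_0: "((\<lambda>t. S t x) \<longlongrightarrow> x) (at_right 0)"
  using c0 by (simp add: c0_semigroup_def)

text \<open>Along a sequence \<open>t\<^sub>n \<rightarrow> 0\<close> the operators \<open>S t\<^sub>n\<close> are pointwise bounded by strong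
  continuity, so the uniform boundedness principle applies.\<close>
lemma bounded_near_0: "\<exists>\<delta>>0. \<exists>M. \<forall>t\<in>{0..\<delta>}. \<forall>x. norm (S t x) \<le> M * norm x"
proof (rule ccontr)
  assume "\<not> ?thesis"
  then have "\<forall>n. \<exists>t\<in>{0..inverse (real (Suc n))}. \<exists>x. real n * norm x < norm (S t x)"
    by (metis inverse_positive_iff_positive of_nat_0_less_iff zero_less_Suc not_le)
  then obtain t x where t: "\<And>n. t n \<in> {0..inverse (real (Suc n))}"
    and x: "\<And>n. real n * norm (x n) < norm (S (t n) (x n))"
    by metis
  have t_0: "(t \<longlongrightarrow> 0) sequentially"
    using t by (intro tendsto_sandwich[OF _ _ tendsto_const LIMSEQ_inverse_real_of_nat]) auto
  have cont: "continuous (at 0 within {0..}) (\<lambda>t. S t y)" for y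
    using tendsto_S_0 by (simp add: continuous_within at_within_Ici_at_right)
  have "(\<lambda>n. S (t n) y) \<longlonglongrightarrow> S 0 y" for y
    using t by (intro continuous_within_tendsto_compose'[OF cont _ t_0]) auto
  then have "Bseq (\<lambda>n. S (t n) y)" for y
    using convergent_imp_Bseq convergent_def by blast
  then have "\<exists>B. \<forall>n. norm (S (t n) y) \<le> B" for y
    unfolding Bseq_def by (meson less_imp_le)
  then obtain M where M: "\<And>n y. norm (S (t n) y) \<le> M * norm y"
    using uniform_boundedness[of "\<lambda>n. S (t n)"] bounded_linear_S t by fastforce
  obtain n :: nat where "M \<le> real n"
    using real_nat_ceiling_ge by blast
  then have "norm (S (t n) (x n)) \<le> real n * norm (x n)"
    using M[of n "x n"] by (meson mult_right_mono norm_ge_zero order_trans)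
  with x[of n] show False
    by simp
qed

lemma bounded_on_multiples:
  assumes \<delta>: "\<delta> > 0" and M1: "M \<ge> 1"
    and M: "\<And>t x. t \<in> {0..\<delta>} \<Longrightarrow> norm (S t x) \<le> M * norm x"
  shows "\<forall>t\<in>{0..real n * \<delta>}. \<forall>x. norm (S t x) \<le> M ^ Suc n * norm x"
proof (induction n)
  case 0
  show ?case
  proof (intro ballI allI)
    fix t and x :: 'a
    assume "t \<in> {0..real 0 * \<delta>}"
    then have "t = 0"
      by simp
    moreover have "norm x \<le> M * norm x"
      using M1 mult_right_mono[of 1 M "norm x"] by simp
    ultimately show "norm (S t x) \<le> M ^ Suc 0 * norm x"
      by (simp only: S_0 power_Suc0_right)
  qed
next
  case (Suc n)
  show ?case
  proof (intro ballI allI)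
    fix t and x :: 'a
    assume t: "t \<in> {0..real (Suc n) * \<delta>}"
    show "norm (S t x) \<le> M ^ Suc (Suc n) * norm x"
    proof (cases "t \<le> \<delta>")
      case True
      have "norm (S t x) \<le> M * norm x"
        using M t True by simp
      also have "\<dots> \<le> M ^ Suc (Suc n) * norm x"
        using M1 power_increasing[of 1 "Suc (Suc n)" M] by (intro mult_right_mono) simp_all
      finally show ?thesis .
    next
      case False
      then have "S t x = S \<delta> (S (t - \<delta>) x)"
        using S_add[of \<delta> "t - \<delta>"] \<delta> by simp
      also have "norm \<dots> \<le> M * norm (S (t - \<delta>) x)"
        using M \<delta> by simp
      also have "\<dots> \<le> M * (M ^ Suc n * norm x)"
        using Suc.IH t False M1 by (intro mult_left_mono) (auto simp: algebra_simps)
      finally show ?thesis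
        by (simp add: mult.assoc)
    qed
  qed
qed

lemma bounded_on_interval: "\<exists>M\<ge>0. \<forall>t\<in>{0..T}. \<forall>x. norm (S t x) \<le> M * norm x"
proof -
  obtain \<delta> M0 where \<delta>: "\<delta> > 0" and M0: "\<And>t x. t \<in> {0..\<delta>} \<Longrightarrow> norm (S t x) \<le> M0 * norm x"
    using bounded_near_0 by blast
  define M where "M = max M0 1"
  have M1: "M \<ge> 1" and "M0 \<le> M"
    by (simp_all add: M_def)
  then have M: "norm (S t x) \<le> M * norm x" if "t \<in> {0..\<delta>}" for t x
    using M0[OF that, of x] by (meson mult_right_mono norm_ge_zero order_trans)
  obtain n where n: "T \<le> real n * \<delta>"
    using reals_Archimedean3[OF \<delta>] less_imp_le by blast
  have "\<forall>t\<in>{0..T}. \<forall>x. norm (S t x) \<le> M ^ Suc n * norm x"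
    using bounded_on_multiples[OF \<delta> M1 M, of n] n by auto
  moreover have "M ^ Suc n \<ge> 0"
    using M1 by simp
  ultimately show ?thesis
    by blast
qed

text \<open>Both continuity and differentiability of orbits reduce to the behaviour at \<open>0\<close> through
  this identity.\<close>
lemma S_diff_S:
  assumes "r \<ge> 0" "t \<ge> 0"
  shows "S r x - S t x = sgn (r - t) *\<^sub>R S (min r t) (S \<bar>r - t\<bar> x - x)"
proof (cases "t \<le> r")
  case True
  then show ?thesis
    using assms S_add[of t "r - t" x] by (cases "t = r") (simp_all add: S_diff)
next
  case False
  then show ?thesis
    using assms S_add[of r "t - r" x] by (simp add: S_diff)
qed

lemma tendsto_orbit:
  assumes "t \<ge> 0"
  shows "((\<lambda>r. S r x) \<longlongrightarrow> S t x) (at t within {0..})"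
proof -
  obtain M where M: "\<And>s y. s \<in> {0..t} \<Longrightarrow> norm (S s y) \<le> M * norm y"
    using bounded_on_interval by blast
  have "((\<lambda>r. S r x - S t x) \<longlongrightarrow> 0) (at t within {0..})"
  proof (rule Lim_null_comparison)
    show "eventually (\<lambda>r. norm (S r x - S t x) \<le> M * norm (S \<bar>r - t\<bar> x - x)) (at t within {0..})"
      unfolding eventually_at_filter
      using assms M by (intro always_eventually) (auto simp: S_diff_S abs_sgn_eq)
    have "((\<lambda>r. S \<bar>r - t\<bar> x - x) \<longlongrightarrow> 0) (at t within {0..})"
      using filterlim_compose[OF tendsto_S_0 filterlim_abs_diff_at_right] by (rule LIM_zero)
    then show "((\<lambda>r. M * norm (S \<bar>r - t\<bar> x - x)) \<longlongrightarrow> 0) (at t within {0..})"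
      by (intro tendsto_mult_right_zero tendsto_norm_zero)
  qed
  then show ?thesis
    by (rule LIM_zero_cancel)
qed

lemma continuous_on_orbit: "continuous_on {0..} (\<lambda>t. S t x)"
  using tendsto_orbit by (simp add: continuous_on_def)

lemma integrable_orbit: "a \<ge> 0 \<Longrightarrow> (\<lambda>s. S s x) integrable_on {a..b}"
  by (intro integrable_continuous_real continuous_on_subset[OF continuous_on_orbit]) auto

lemma tendsto_gen:
  assumes "x \<in> gen_dom S"
  shows "((\<lambda>h. (1 / h) *\<^sub>R (S h x - x)) \<longlongrightarrow> gen S x) (at_right 0)"
proof -
  obtain y where y: "((\<lambda>h. (1 / h) *\<^sub>R (S h x - x)) \<longlongrightarrow> y) (at_right 0)"
    using assms by (auto simp: gen_dom_def)
  moreover from y have "gen S x = y"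
    unfolding gen_def by (intro tendsto_Lim) simp_all
  ultimately show ?thesis
    by simp
qed

lemma
  assumes "((\<lambda>h. (1 / h) *\<^sub>R (S h x - x)) \<longlongrightarrow> y) (at_right 0)"
  shows gen_domI: "x \<in> gen_dom S" and gen_eqI: "gen S x = y"
proof -
  show "x \<in> gen_dom S"
    using assms by (auto simp: gen_dom_def)
  then show "gen S x = y"
    using assms tendsto_gen by (intro tendsto_unique[of "at_right 0"]) simp_all
qed

lemma gen_dom_add:
  assumes "x \<in> gen_dom S" "y \<in> gen_dom S"
  shows "x + y \<in> gen_dom S"
proof -
  have "((\<lambda>h. (1 / h) *\<^sub>R (S h x - x) + (1 / h) *\<^sub>R (S h y - y)) \<longlongrightarrow> gen S x + gen S y) (at_right 0)"
    using assms by (intro tendsto_add tendsto_gen)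
  moreover have "eventually (\<lambda>h. (1 / h) *\<^sub>R (S h x - x) + (1 / h) *\<^sub>R (S h y - y)
      = (1 / h) *\<^sub>R (S h (x + y) - (x + y))) (at_right 0)"
    using eventually_at_right_less
    by eventually_elim (simp add: linear_add[OF linear_S] scaleR_diff_right scaleR_add_right)
  ultimately have "((\<lambda>h. (1 / h) *\<^sub>R (S h (x + y) - (x + y))) \<longlongrightarrow> gen S x + gen S y) (at_right 0)"
    by (rule Lim_transform_eventually)
  then show ?thesis
    by (rule gen_domI)
qed

lemma gen_dom_cscale:
  assumes "x \<in> gen_dom S"
  shows "cscale a x \<in> gen_dom S"
proof -
  have "((\<lambda>h. cscale a ((1 / h) *\<^sub>R (S h x - x))) \<longlongrightarrow> cscale a (gen S x)) (at_right 0)"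
    using assms by (intro cscale.tendsto tendsto_const tendsto_gen)
  moreover have "eventually (\<lambda>h. cscale a ((1 / h) *\<^sub>R (S h x - x))
      = (1 / h) *\<^sub>R (S h (cscale a x) - cscale a x)) (at_right 0)"
    using eventually_at_right_less
    by eventually_elim (simp add: S_cscale cscale.scaleR_right cscale.diff_right)
  ultimately have "((\<lambda>h. (1 / h) *\<^sub>R (S h (cscale a x) - cscale a x)) \<longlongrightarrow> cscale a (gen S x)) (at_right 0)"
    by (rule Lim_transform_eventually)
  then show ?thesis
    by (rule gen_domI)
qed

lemma gen_dom_scaleR: "x \<in> gen_dom S \<Longrightarrow> r *\<^sub>R x \<in> gen_dom S"
  using gen_dom_cscale[of x "complex_of_real r"] by (simp add: cscale_of_real)

lemma
  assumes "x \<in> gen_dom S" "t \<ge> 0"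
  shows gen_dom_S: "S t x \<in> gen_dom S" and gen_S: "gen S (S t x) = S t (gen S x)"
proof -
  have "((\<lambda>h. S t ((1 / h) *\<^sub>R (S h x - x))) \<longlongrightarrow> S t (gen S x)) (at_right 0)"
    using assms by (intro bounded_linear.tendsto[OF bounded_linear_S] tendsto_gen)
  moreover have "eventually (\<lambda>h. S t ((1 / h) *\<^sub>R (S h x - x))
      = (1 / h) *\<^sub>R (S h (S t x) - S t x)) (at_right 0)"
    using eventually_at_right_less
  proof eventually_elim
    case (elim h)
    then have "S h (S t x) = S t (S h x)"
      using S_add[of h t x] S_add[of t h x] assms(2) by (simp add: add.commute)
    then show ?case
      using assms(2) by (simp add: linear_scale[OF linear_S] S_diff)
  qed
  ultimately have "((\<lambda>h. (1 / h) *\<^sub>R (S h (S t x) - S t x)) \<longlongrightarrow> S t (gen S x)) (at_right 0)"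
    by (rule Lim_transform_eventually)
  then show "S t x \<in> gen_dom S" "gen S (S t x) = S t (gen S x)"
    by (rule gen_domI, rule gen_eqI)
qed

lemma has_vector_derivative_orbit:
  assumes x: "x \<in> gen_dom S" and t: "t \<ge> 0"
  shows "((\<lambda>r. S r x) has_vector_derivative S t (gen S x)) (at t within {0..})"
proof -
  obtain M where M: "\<And>s y. s \<in> {0..t} \<Longrightarrow> norm (S s y) \<le> M * norm y"
    using bounded_on_interval by blast
  have quotient: "S (min r t) ((1 / \<bar>r - t\<bar>) *\<^sub>R (S \<bar>r - t\<bar> x - x)) = (1 / (r - t)) *\<^sub>R (S r x - S t x)"
    if "r \<ge> 0" "r \<noteq> t" for r
  proof -
    have "(1 / (r - t)) * sgn (r - t) = 1 / \<bar>r - t\<bar>"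
      using that(2) by (cases "t < r") (simp_all add: sgn_if minus_divide_right)
    then show ?thesis
      using that t S_diff_S[of r t x] by (simp add: linear_scale[OF linear_S])
  qed
  have "((\<lambda>r. min r t) \<longlongrightarrow> min t t) (at t within {0..})"
    by (intro tendsto_min tendsto_ident_at tendsto_const)
  then have "((\<lambda>r. S (min r t) (gen S x)) \<longlongrightarrow> S t (gen S x)) (at t within {0..})"
    using t by (intro continuous_on_tendsto_compose[OF continuous_on_orbit]) (auto simp: eventually_at_filter)
  then have "((\<lambda>r. S (min r t) ((1 / \<bar>r - t\<bar>) *\<^sub>R (S \<bar>r - t\<bar> x - x))) \<longlongrightarrow> S t (gen S x))
      (at t within {0..})"
  proof (rule tendsto_apply_bounded_family[where T = "\<lambda>r. S (min r t)" and M = M, rotated 2])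
    show "eventually (\<lambda>r. linear (S (min r t))) (at t within {0..})"
      unfolding eventually_at_filter using t by (intro always_eventually allI impI linear_S) simp
    show "eventually (\<lambda>r. \<forall>y. norm (S (min r t) y) \<le> M * norm y) (at t within {0..})"
      unfolding eventually_at_filter using t by (intro always_eventually allI impI M) simp
    show "((\<lambda>r. (1 / \<bar>r - t\<bar>) *\<^sub>R (S \<bar>r - t\<bar> x - x)) \<longlongrightarrow> gen S x) (at t within {0..})"
      using filterlim_compose[OF tendsto_gen[OF x] filterlim_abs_diff_at_right] .
  qed
  then show ?thesis
    unfolding has_vector_derivative_iff
    by (rule Lim_transform_eventually) (auto simp: eventually_at_filter quotient)
qed

lemma orbit_diff_eq_integral:
  assumes x: "x \<in> gen_dom S" and t: "t \<ge> 0"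
  shows "S t x - x = integral {0..t} (\<lambda>s. S s (gen S x))"
proof -
  have "((\<lambda>r. S r x) has_vector_derivative S s (gen S x)) (at s within {0..t})" if "s \<in> {0..t}" for s
    using that by (intro has_vector_derivative_within_subset[OF has_vector_derivative_orbit[OF x]]) auto
  then have "((\<lambda>s. S s (gen S x)) has_integral (S t x - S 0 x)) {0..t}"
    using t by (intro fundamental_theorem_of_calculus)
  then show ?thesis
    by (simp add: integral_unique)
qed

text \<open>Shifting the orbit by \<open>S h\<close> moves the window \<open>[0, t]\<close> to \<open>[h, t + h]\<close>, so the
  difference quotient of the integral is a difference of two averages over windows of length \<open>h\<close>.\<close>
lemma
  assumes t: "t \<ge> 0"
  shows gen_dom_integral_orbit: "integral {0..t} (\<lambda>s. S s x) \<in> gen_dom S"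
    and gen_integral_orbit: "gen S (integral {0..t} (\<lambda>s. S s x)) = S t x - x"
proof -
  define f where "f s = S s x" for s
  define I where "I = integral {0..t} f"
  have window: "(1 / h) *\<^sub>R (S h I - I) = (1 / h) *\<^sub>R integral {t..t + h} f - (1 / h) *\<^sub>R integral {0..h} f"
    if h: "h > 0" for h
  proof -
    have "S h I = integral {0..t} (S h \<circ> f)"
      unfolding I_def f_def using integral_linear[OF integrable_orbit bounded_linear_S] h by simp
    also have "\<dots> = integral {0..t} (f \<circ> (+) h)"
      using h by (intro integral_cong) (simp add: f_def S_add)
    also have "\<dots> = integral {h..t + h} f"
      using integral_shift_Icc_real[of 0 t f h] by (simp add: add.commute)
    finally have shifted: "S h I = integral {h..t + h} f" .
    have "integral {0..h} f + integral {h..t + h} f = integral {0..t + h} f"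
      "integral {0..t} f + integral {t..t + h} f = integral {0..t + h} f"
      using h t unfolding f_def
      by (intro Henstock_Kurzweil_Integration.integral_combine integrable_orbit; simp)+
    then have "integral {h..t + h} f = integral {0..t + h} f - integral {0..h} f"
      "integral {t..t + h} f = integral {0..t + h} f - integral {0..t} f"
      by (metis add_diff_cancel_left')+
    then have "S h I - I = integral {t..t + h} f - integral {0..h} f"
      unfolding shifted by (simp add: I_def)
    then show ?thesis
      by (simp add: scaleR_diff_right)
  qed
  have cont: "continuous_on {a..b} f" if "a \<ge> 0" for a b
    unfolding f_def using that by (intro continuous_on_subset[OF continuous_on_orbit]) auto
  have "((\<lambda>h. (1 / h) *\<^sub>R integral {t..t + h} f - (1 / h) *\<^sub>R integral {0..h} f) \<longlongrightarrow> S t x - x)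
      (at_right 0)"
    using tendsto_integral_average[OF cont[OF t], of "t + 1"] tendsto_integral_average[OF cont, of 0 1]
    by (intro tendsto_diff) (simp_all add: f_def)
  then have "((\<lambda>h. (1 / h) *\<^sub>R (S h I - I)) \<longlongrightarrow> S t x - x) (at_right 0)"
    by (rule Lim_transform_eventually) (use eventually_at_right_less in \<open>eventually_elim; simp add: window\<close>)
  then show "integral {0..t} (\<lambda>s. S s x) \<in> gen_dom S" "gen S (integral {0..t} (\<lambda>s. S s x)) = S t x - x"
    unfolding I_def f_def by (rule gen_domI, rule gen_eqI)
qed

lemma closure_gen_dom: "closure (gen_dom S) = UNIV"
proof -
  have "x \<in> closure (gen_dom S)" for x
  proof (rule Lim_in_closed_set[OF closed_closure])
    have "continuous_on {0..1} (\<lambda>s. S s x)"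
      by (intro continuous_on_subset[OF continuous_on_orbit]) auto
    then show "((\<lambda>h. (1 / h) *\<^sub>R integral {0..h} (\<lambda>s. S s x)) \<longlongrightarrow> x) (at_right 0)"
      using tendsto_integral_average[of 0 1 "\<lambda>s. S s x"] by simp
    show "eventually (\<lambda>h. (1 / h) *\<^sub>R integral {0..h} (\<lambda>s. S s x) \<in> closure (gen_dom S)) (at_right 0)"
      using eventually_at_right_less
      by eventually_elim (intro closure_subset[THEN subsetD] gen_dom_scaleR gen_dom_integral_orbit; simp)
  qed simp
  then show ?thesis
    by blast
qed

lemma
  assumes xs: "\<And>n. xs n \<in> gen_dom S" and lim_xs: "xs \<longlonglongrightarrow> x"
    and lim_gen: "(\<lambda>n. gen S (xs n)) \<longlonglongrightarrow> y"
  shows gen_dom_closed: "x \<in> gen_dom S" and gen_closed: "gen S x = y"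
proof -
  have orbit_diff: "S h x - x = integral {0..h} (\<lambda>s. S s y)" if h: "h \<ge> 0" for h
  proof -
    obtain M where M: "\<And>s v. s \<in> {0..h} \<Longrightarrow> norm (S s v) \<le> M * norm v"
      using bounded_on_interval by blast
    have "(\<lambda>n. S h (xs n) - xs n) \<longlonglongrightarrow> S h x - x"
      using h by (intro tendsto_diff bounded_linear.tendsto[OF bounded_linear_S] lim_xs)
    moreover have "(\<lambda>n. integral {0..h} (\<lambda>s. S s (gen S (xs n)))) \<longlonglongrightarrow> integral {0..h} (\<lambda>s. S s y)"
      using h M lim_gen
      by (intro tendsto_integral_apply_family[where M = M] linear_S continuous_on_subset[OF continuous_on_orbit])
        auto
    ultimately show ?thesis
      using orbit_diff_eq_integral[OF xs h] LIMSEQ_unique by simp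
  qed
  have "continuous_on {0..1} (\<lambda>s. S s y)"
    by (intro continuous_on_subset[OF continuous_on_orbit]) auto
  then have "((\<lambda>h. (1 / h) *\<^sub>R integral {0..h} (\<lambda>s. S s y)) \<longlongrightarrow> y) (at_right 0)"
    using tendsto_integral_average[of 0 1 "\<lambda>s. S s y"] by simp
  then have "((\<lambda>h. (1 / h) *\<^sub>R (S h x - x)) \<longlongrightarrow> y) (at_right 0)"
    by (rule Lim_transform_eventually) (use eventually_at_right_less in \<open>eventually_elim; simp add: orbit_diff\<close>)
  then show "x \<in> gen_dom S" "gen S x = y"
    by (rule gen_domI, rule gen_eqI)
qed

lemma has_vector_derivative_reversed_orbit:
  assumes y: "y \<in> gen_dom S" and s: "s \<in> {0..t}"
  shows "((\<lambda>r. S (t - r) y) has_vector_derivative - S (t - s) (gen S y)) (at s within {0..t})"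
proof -
  have "((\<lambda>r. t - r) has_vector_derivative -1) (at s within {0..t})"
    by (auto intro!: derivative_eq_intros simp: has_real_derivative_iff_has_vector_derivative[symmetric])
  moreover have "((\<lambda>\<sigma>. S \<sigma> y) has_vector_derivative S (t - s) (gen S y)) (at (t - s) within (\<lambda>r. t - r) ` {0..t})"
    using s by (intro has_vector_derivative_within_subset[OF has_vector_derivative_orbit[OF y]]) auto
  ultimately show ?thesis
    using vector_diff_chain_within by (fastforce simp: o_def)
qed

lemma Duhamel_formula:
  assumes T: "strongly_continuous_semigroup T"
    and x: "x \<in> gen_dom T" and orbit: "\<And>s. s \<ge> 0 \<Longrightarrow> T s x \<in> gen_dom S" and t: "t \<ge> 0"
  shows "S t x - T t x = integral {0..t} (\<lambda>s. S (t - s) (gen S (T s x) - gen T (T s x)))"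
proof -
  interpret T: strongly_continuous_semigroup T
    by (rule T)
  obtain M where M: "\<And>r y. r \<in> {0..t} \<Longrightarrow> norm (S r y) \<le> M * norm y"
    using bounded_on_interval by blast
  have "((\<lambda>r. S (t - r) (T r x)) has_vector_derivative - S (t - s) (gen S (T s x) - gen T (T s x)))
      (at s within {0..t})" if s: "s \<in> {0..t}" for s
  proof -
    have "((\<lambda>r. S (t - r) (T s x)) has_vector_derivative - S (t - s) (gen S (T s x)))
        (at s within {0..t})"
      using s orbit[of s] by (intro has_vector_derivative_reversed_orbit) auto
    moreover have "((\<lambda>r. T r x) has_vector_derivative T s (gen T x)) (at s within {0..t})"
      using s by (intro has_vector_derivative_within_subset[OF T.has_vector_derivative_orbit[OF x]]) auto
    moreover have "((\<lambda>r. S (t - r) (T s (gen T x))) \<longlongrightarrow> S (t - s) (T s (gen T x))) (at s within {0..t})"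
      using s by (intro continuous_on_tendsto_compose[OF continuous_on_orbit] tendsto_intros)
        (auto simp: eventually_at_filter)
    ultimately have "((\<lambda>r. S (t - r) (T r x)) has_vector_derivative
        S (t - s) (T s (gen T x)) + - S (t - s) (gen S (T s x))) (at s within {0..t})"
      using M by (intro has_vector_derivative_apply_family[where M = M] linear_S) auto
    moreover have "T s (gen T x) = gen T (T s x)"
      using s T.gen_S[OF x] by simp
    ultimately show ?thesis
      using s by (simp add: S_diff)
  qed
  then have ftc: "((\<lambda>s. - S (t - s) (gen S (T s x) - gen T (T s x))) has_integral
      (S (t - t) (T t x) - S (t - 0) (T 0 x))) {0..t}"
    using t by (intro fundamental_theorem_of_calculus)
  have "((\<lambda>s. S (t - s) (gen S (T s x) - gen T (T s x))) has_integral (S t x - T t x)) {0..t}"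
    using has_integral_neg[OF ftc] by simp
  then show ?thesis
    by (rule integral_unique[symmetric])
qed

lemma projQ_in_gen_dom_iff:
  assumes z: "z \<in> gen_dom S"
  shows "projQ z x \<in> gen_dom S \<longleftrightarrow> x \<in> gen_dom S"
proof -
  define c where "c = cinner x z / cinner z z"
  have "projQ z x = x + cscale (- c) z" "x = projQ z x + cscale c z"
    by (simp_all add: projQ_def projP_def c_def cscale.minus_left)
  then show ?thesis
    using z by (metis gen_dom_add gen_dom_cscale)
qed

lemma gen_eq_projQ_add:
  assumes "z \<in> adj_dom (gen_dom S) (gen S)" "x \<in> gen_dom S"
  shows "gen S x = projQ z (gen S x) + cscale (cinner x (adj (gen_dom S) (gen S) z) / cinner z z) z"
  using cinner_adj[OF closure_gen_dom assms] by (simp add: projQ_def projP_def)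

text \<open>\<open>Q L\<close> differs from the closed operator \<open>L\<close> by the rank-one operator
  \<open>x \<mapsto> (x, L\<^sup>\<dagger>z)(z, z)\<^sup>-\<^sup>1 z\<close>, which is bounded because \<open>z \<in> D(L\<^sup>\<dagger>)\<close>.\<close>
lemma closed_graph_projQ_gen:
  assumes z: "z \<in> adj_dom (gen_dom S) (gen S)"
  shows "closed {(x, projQ z (gen S x)) | x. x \<in> gen_dom S}"
  unfolding closed_sequential_limits
proof (intro allI impI, elim conjE)
  define z' where "z' = adj (gen_dom S) (gen S) z"
  fix p :: "nat \<Rightarrow> 'a \<times> 'a" and l
  assume p: "\<forall>n. p n \<in> {(x, projQ z (gen S x)) | x. x \<in> gen_dom S}" and lim_p: "p \<longlonglongrightarrow> l"
  define xs where "xs n = fst (p n)" for n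
  have xs: "xs n \<in> gen_dom S" and snd_p: "snd (p n) = projQ z (gen S (xs n))" for n
    using p[rule_format, of n] by (auto simp: xs_def)
  have lim_xs: "xs \<longlonglongrightarrow> fst l"
    unfolding xs_def by (intro tendsto_fst lim_p)
  have "(\<lambda>n. projQ z (gen S (xs n)) + cscale (cinner (xs n) z' / cinner z z) z)
      \<longlonglongrightarrow> snd l + cscale (cinner (fst l) z' / cinner z z) z"
    using tendsto_snd[OF lim_p] snd_p
    by (intro tendsto_add cscale.tendsto bounded_linear.tendsto[OF bounded_linear_divide] cinner.tendsto
        lim_xs tendsto_const) simp_all
  then have lim_gen: "(\<lambda>n. gen S (xs n)) \<longlonglongrightarrow> snd l + cscale (cinner (fst l) z' / cinner z z) z"
    using gen_eq_projQ_add[OF z xs] by (simp add: z'_def)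
  have l_dom: "fst l \<in> gen_dom S"
    using gen_dom_closed[OF xs lim_xs lim_gen] .
  have "gen S (fst l) = snd l + cscale (cinner (fst l) z' / cinner z z) z"
    using gen_closed[OF xs lim_xs lim_gen] .
  then have "projQ z (gen S (fst l)) = snd l"
    using gen_eq_projQ_add[OF z l_dom] by (metis add_right_cancel z'_def)
  then have "l = (fst l, projQ z (gen S (fst l)))"
    by simp
  with l_dom show "l \<in> {(x, projQ z (gen S x)) | x. x \<in> gen_dom S}"
    by blast
qed

end

section \<open>Orthogonal dynamics\<close>

locale orthogonal_dynamics =
  U: strongly_continuous_semigroup U + G: strongly_continuous_semigroup G
  for U G :: "real \<Rightarrow> 'a::chilbert \<Rightarrow> 'a" +
  fixes z :: 'a
  assumes z_gen_dom: "z \<in> gen_dom U"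
    and z_adj_dom: "z \<in> adj_dom (gen_dom U) (gen U)"
    and z_nonzero: "z \<noteq> 0"
    and gen_dom_G: "gen_dom G = {x. projQ z x \<in> cl_dom (gen_dom U) (\<lambda>x. projQ z (gen U x))}"
    and gen_G: "\<And>x. x \<in> gen_dom G \<Longrightarrow> gen G x = cl_op (gen_dom U) (\<lambda>x. projQ z (gen U x)) (projQ z x)"
begin

abbreviation adj_z :: 'a where
  "adj_z \<equiv> adj (gen_dom U) (gen U) z"

lemma gen_dom_G_eq: "gen_dom G = gen_dom U"
  using U.projQ_in_gen_dom_iff[OF z_gen_dom]
  by (simp add: gen_dom_G cl_dom_closed_graph[OF U.closed_graph_projQ_gen[OF z_adj_dom]])

lemma gen_G_eq: "x \<in> gen_dom U \<Longrightarrow> gen G x = projQ z (gen U (projQ z x))"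
  using gen_G[of x] gen_dom_G_eq U.projQ_in_gen_dom_iff[OF z_gen_dom, of x]
    cl_op_closed_graph[OF U.closed_graph_projQ_gen[OF z_adj_dom]]
  by simp

lemma cinner_G_z:
  assumes x: "cinner x z = 0" and t: "t \<ge> 0"
  shows "cinner (G t x) z = 0"
proof -
  have "G t x - x = gen G (integral {0..t} (\<lambda>s. G s x))"
    using G.gen_integral_orbit[OF t] by simp
  also have "\<dots> = projQ z (gen U (projQ z (integral {0..t} (\<lambda>s. G s x))))"
    using G.gen_dom_integral_orbit[OF t] gen_dom_G_eq gen_G_eq by simp
  finally have "cinner (G t x - x) z = 0"
    using cinner_projQ_left[OF z_nonzero] by simp
  with x show ?thesis
    by (simp add: cinner_diff_left)
qed

lemma gen_U_diff_gen_G: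
  assumes y: "y \<in> gen_dom U" "cinner y z = 0"
  shows "gen U y - gen G y = cscale (cinner y adj_z / cinner z z) z"
proof -
  have "gen G y = projQ z (gen U y)"
    using gen_G_eq[OF y(1)] projQ_eq_self[OF y(2)] by simp
  then show ?thesis
    using U.gen_eq_projQ_add[OF z_adj_dom y(1)] by (metis add_diff_cancel_left')
qed

lemma Duhamel_orthogonal_gen_dom:
  assumes y: "y \<in> gen_dom U" "cinner y z = 0" and t: "t \<ge> 0"
  shows "U t y - G t y = integral {0..t} (\<lambda>s. cscale (cinner (G s y) adj_z / cinner z z) (U (t - s) z))"
proof -
  have "U t y - G t y = integral {0..t} (\<lambda>s. U (t - s) (gen U (G s y) - gen G (G s y)))"
    using y t gen_dom_G_eq G.gen_dom_S
    by (intro U.Duhamel_formula[OF G.strongly_continuous_semigroup_axioms]) auto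
  also have "\<dots> = integral {0..t} (\<lambda>s. cscale (cinner (G s y) adj_z / cinner z z) (U (t - s) z))"
  proof (rule integral_cong)
    fix s assume s: "s \<in> {0..t}"
    then have "G s y \<in> gen_dom U" "cinner (G s y) z = 0"
      using y gen_dom_G_eq G.gen_dom_S cinner_G_z by auto
    then show "U (t - s) (gen U (G s y) - gen G (G s y))
        = cscale (cinner (G s y) adj_z / cinner z z) (U (t - s) z)"
      using s by (simp add: gen_U_diff_gen_G U.S_cscale)
  qed
  finally show ?thesis .
qed

lemma tendsto_Duhamel_integral:
  assumes lim: "xs \<longlonglongrightarrow> x" and t: "t \<ge> 0"
  shows "(\<lambda>n. integral {0..t} (\<lambda>s. cscale (cinner (G s (xs n)) adj_z / cinner z z) (U (t - s) z)))
    \<longlonglongrightarrow> integral {0..t} (\<lambda>s. cscale (cinner (G s x) adj_z / cinner z z) (U (t - s) z))"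
proof -
  obtain MU where MU: "MU \<ge> 0" "\<And>s v. s \<in> {0..t} \<Longrightarrow> norm (U s v) \<le> MU * norm v"
    using U.bounded_on_interval by blast
  obtain MG where MG: "MG \<ge> 0" "\<And>s v. s \<in> {0..t} \<Longrightarrow> norm (G s v) \<le> MG * norm v"
    using G.bounded_on_interval by blast
  show ?thesis
  proof (rule tendsto_integral_apply_family[OF _ _ _ lim t])
    fix s assume s: "s \<in> {0..t}"
    show "linear (\<lambda>v. cscale (cinner (G s v) adj_z / cinner z z) (U (t - s) z))"
      using s
      by (intro bounded_linear.linear bounded_linear_compose[OF cscale.bounded_linear_left]
          bounded_linear_compose[OF bounded_linear_divide] bounded_linear_compose[OF cinner.bounded_linear_left]
          G.bounded_linear_S) simp
    show "norm (cscale (cinner (G s v) adj_z / cinner z z) (U (t - s) z))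
        \<le> MG * norm adj_z / cmod (cinner z z) * (MU * norm z) * norm v" for v
    proof -
      have "cmod (cinner (G s v) adj_z / cinner z z) \<le> MG * norm v * norm adj_z / cmod (cinner z z)"
        using cmod_cinner_le[of "G s v" adj_z] MG(2)[OF s, of v]
        by (simp add: norm_divide divide_right_mono mult_right_mono order_trans)
      moreover have "norm (U (t - s) z) \<le> MU * norm z"
        using MU(2) s by simp
      ultimately have "norm (cscale (cinner (G s v) adj_z / cinner z z) (U (t - s) z))
          \<le> MG * norm v * norm adj_z / cmod (cinner z z) * (MU * norm z)"
        unfolding norm_cscale using MG(1) by (intro mult_mono) simp_all
      then show ?thesis
        by (simp add: mult_ac)
    qed
  next
    fix v
    show "continuous_on {0..t} (\<lambda>s. cscale (cinner (G s v) adj_z / cinner z z) (U (t - s) z))"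
      using z_nonzero
      by (intro cscale.continuous_on continuous_intros cinner.continuous_on
          continuous_on_subset[OF G.continuous_on_orbit]
          continuous_on_compose2[OF U.continuous_on_orbit, of _ "\<lambda>s. t - s"]) auto
  qed
qed

text \<open>\<open>Q D(L)\<close> is dense in \<open>z\<^sup>\<bottom>\<close>, and both sides are continuous in \<open>x\<close>.\<close>
lemma Duhamel_orthogonal:
  assumes x: "cinner x z = 0" and t: "t \<ge> 0"
  shows "U t x - G t x = integral {0..t} (\<lambda>s. cscale (cinner (G s x) adj_z / cinner z z) (U (t - s) z))"
proof -
  obtain xs where xs: "\<And>n. xs n \<in> gen_dom U" and lim_xs: "xs \<longlonglongrightarrow> x"
    using closure_sequential[of x "gen_dom U"] U.closure_gen_dom by blast
  define ys where "ys n = projQ z (xs n)" for n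
  have ys: "ys n \<in> gen_dom U" "cinner (ys n) z = 0" for n
    unfolding ys_def using U.projQ_in_gen_dom_iff[OF z_gen_dom] xs cinner_projQ_left[OF z_nonzero] by auto
  have "(\<lambda>n. xs n - cscale (cinner (xs n) z / cinner z z) z) \<longlonglongrightarrow> x - cscale (cinner x z / cinner z z) z"
    by (intro tendsto_diff cscale.tendsto bounded_linear.tendsto[OF bounded_linear_divide] cinner.tendsto
        lim_xs tendsto_const)
  then have lim_ys: "ys \<longlonglongrightarrow> x"
    using x by (simp add: ys_def[abs_def] projQ_def projP_def cscale.zero_left)
  have "(\<lambda>n. U t (ys n) - G t (ys n)) \<longlonglongrightarrow> U t x - G t x"
    using t by (intro tendsto_diff bounded_linear.tendsto[OF U.bounded_linear_S]
        bounded_linear.tendsto[OF G.bounded_linear_S] lim_ys)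
  then show ?thesis
    using Duhamel_orthogonal_gen_dom[OF ys t] tendsto_Duhamel_integral[OF lim_ys t] LIMSEQ_unique
    by simp
qed

definition memory_kernel :: "real \<Rightarrow> complex" where
  "memory_kernel t = cinner (G t (projQ z (gen U z))) adj_z / cinner z z"

lemma continuous_on_memory_kernel: "continuous_on {0..} memory_kernel"
  unfolding memory_kernel_def[abs_def] using z_nonzero
  by (intro continuous_intros cinner.continuous_on G.continuous_on_orbit) auto

lemma U_diff_G_eq_convolution:
  assumes t: "t \<ge> 0"
  shows "U t (projQ z (gen U z)) - G t (projQ z (gen U z))
    = integral {0..t} (\<lambda>s. cscale (memory_kernel (t - s)) (U s z))"
proof -
  have "U t (projQ z (gen U z)) - G t (projQ z (gen U z))
      = integral {0..t} (\<lambda>s. cscale (memory_kernel s) (U (t - s) z))"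
    using Duhamel_orthogonal[OF cinner_projQ_left[OF z_nonzero] t] by (simp add: memory_kernel_def)
  also have "\<dots> = integral {0..t} (\<lambda>s. cscale (memory_kernel (t - s)) (U s z))"
    using integral_Icc_reflect[of t "\<lambda>s. cscale (memory_kernel s) (U (t - s) z)"] by simp
  finally show ?thesis .
qed

text \<open>Pairing the convolution identity with \<open>Q L\<^sup>\<dagger>z\<close>: since \<open>G\<close> preserves \<open>z\<^sup>\<bottom>\<close>, the projection
  \<open>Q\<close> in front of \<open>L\<^sup>\<dagger>z\<close> does not change \<open>(G t Q L z, \<cdot>)\<close>.\<close>
lemma memory_kernel_Volterra:
  assumes t: "t \<ge> 0"
  shows "memory_kernel t = cinner (U t (projQ z (gen U z))) (projQ z adj_z) / cinner z z
    - integral {0..t} (\<lambda>s. memory_kernel (t - s) * (cinner (U s z) (projQ z adj_z) / cinner z z))"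
proof -
  define \<phi> where "\<phi> v = cinner v (projQ z adj_z) / cinner z z" for v
  have \<phi>: "bounded_linear \<phi>"
    unfolding \<phi>_def by (intro bounded_linear_compose[OF bounded_linear_divide cinner.bounded_linear_left])
  have "continuous_on {0..t} (\<lambda>s. cscale (memory_kernel (t - s)) (U s z))"
    by (intro cscale.continuous_on continuous_on_subset[OF U.continuous_on_orbit]
        continuous_on_compose2[OF continuous_on_memory_kernel, of _ "\<lambda>s. t - s"] continuous_intros) auto
  then have "\<phi> (integral {0..t} (\<lambda>s. cscale (memory_kernel (t - s)) (U s z)))
      = integral {0..t} (\<phi> \<circ> (\<lambda>s. cscale (memory_kernel (t - s)) (U s z)))"
    by (intro integral_linear[OF integrable_continuous_real \<phi>, symmetric])
  also have "\<dots> = integral {0..t} (\<lambda>s. memory_kernel (t - s) * \<phi> (U s z))"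
    by (intro integral_cong) (simp add: \<phi>_def cinner_cscale_left)
  finally have conv: "\<phi> (integral {0..t} (\<lambda>s. cscale (memory_kernel (t - s)) (U s z)))
      = integral {0..t} (\<lambda>s. memory_kernel (t - s) * \<phi> (U s z))" .
  have "\<phi> (G t (projQ z (gen U z))) = memory_kernel t"
    using cinner_projQ_right[OF cinner_G_z[OF cinner_projQ_left[OF z_nonzero] t]]
    by (simp add: \<phi>_def memory_kernel_def)
  then have "\<phi> (U t (projQ z (gen U z))) - memory_kernel t
      = \<phi> (U t (projQ z (gen U z)) - G t (projQ z (gen U z)))"
    by (simp add: linear_diff[OF bounded_linear.linear[OF \<phi>]])
  also have "\<dots> = integral {0..t} (\<lambda>s. memory_kernel (t - s) * \<phi> (U s z))"
    unfolding U_diff_G_eq_convolution[OF t] by (rule conv)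
  finally have "\<phi> (U t (projQ z (gen U z))) - memory_kernel t
      = integral {0..t} (\<lambda>s. memory_kernel (t - s) * \<phi> (U s z))" .
  then show ?thesis
    by (simp add: \<phi>_def algebra_simps)
qed

lemma memory_kernel_unique:
  assumes K_cont: "continuous_on {0..} K"
    and K_eq: "\<And>t. t \<ge> 0 \<Longrightarrow>
      K t = cinner (U t (projQ z (gen U z))) (projQ z adj_z) / cinner z z
        - integral {0..t} (\<lambda>s. K (t - s) * (cinner (U s z) (projQ z adj_z) / cinner z z))"
    and t: "t \<ge> 0"
  shows "K t = memory_kernel t"
proof -
  define f where "f s = - (cinner (U s z) (projQ z adj_z) / cinner z z)" for s
  have cont_f: "continuous_on {0..t} f"
    unfolding f_def using z_nonzero
    by (intro continuous_intros cinner.continuous_on continuous_on_subset[OF U.continuous_on_orbit]) auto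
  have cont_conv: "continuous_on {0..r} (\<lambda>s. k (r - s) * f s)"
    if "continuous_on {0..} k" "r \<in> {0..t}" for k r
    using that by (intro continuous_intros continuous_on_compose2[OF that(1)]
        continuous_on_subset[OF cont_f]) auto
  have "(\<lambda>r. K r - memory_kernel r) t = 0"
  proof (rule Volterra_convolution_eq_0[OF _ cont_f])
    show "continuous_on {0..t} (\<lambda>r. K r - memory_kernel r)"
      by (intro continuous_intros continuous_on_subset[OF K_cont]
          continuous_on_subset[OF continuous_on_memory_kernel]) auto
    fix r assume r: "r \<in> {0..t}"
    have "K r - memory_kernel r
        = integral {0..r} (\<lambda>s. K (r - s) * f s) - integral {0..r} (\<lambda>s. memory_kernel (r - s) * f s)"
      using K_eq[of r] memory_kernel_Volterra[of r] r by (simp add: f_def integral_neg)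
    also have "\<dots> = integral {0..r} (\<lambda>s. (K (r - s) - memory_kernel (r - s)) * f s)"
      using r cont_conv[OF K_cont] cont_conv[OF continuous_on_memory_kernel]
      by (simp add: integral_diff[symmetric] integrable_continuous_real left_diff_distrib)
    finally show "K r - memory_kernel r = integral {0..r} (\<lambda>s. (K (r - s) - memory_kernel (r - s)) * f s)" .
  qed (use t in simp)
  then show ?thesis
    by simp
qed

lemma G_eq_U_minus_convolution:
  assumes K_cont: "continuous_on {0..} K"
    and K_eq: "\<And>t. t \<ge> 0 \<Longrightarrow>
      K t = cinner (U t (projQ z (gen U z))) (projQ z adj_z) / cinner z z
        - integral {0..t} (\<lambda>s. K (t - s) * (cinner (U s z) (projQ z adj_z) / cinner z z))"
    and t: "t \<ge> 0"
  shows "G t (projQ z (gen U z)) = U t (projQ z (gen U z)) - integral {0..t} (\<lambda>s. cscale (K (t - s)) (U s z))"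
proof -
  have "integral {0..t} (\<lambda>s. cscale (K (t - s)) (U s z))
      = integral {0..t} (\<lambda>s. cscale (memory_kernel (t - s)) (U s z))"
    using memory_kernel_unique[OF K_cont K_eq] by (intro integral_cong) simp
  also have "\<dots> = U t (projQ z (gen U z)) - G t (projQ z (gen U z))"
    by (rule U_diff_G_eq_convolution[OF t, symmetric])
  finally show ?thesis
    by simp
qed

end

theorem corollary4:
  fixes U G :: "real \<Rightarrow> 'a::chilbert \<Rightarrow> 'a"
    and z :: 'a
    and K :: "real \<Rightarrow> complex"
    and \<eta> :: "real \<Rightarrow> 'a"
  assumes U: "c0_semigroup U"
    and zL: "z \<in> gen_dom U"
    and zLd: "z \<in> adj_dom (gen_dom U) (gen U)"
    and z0: "z \<noteq> 0"
    and K_cont: "continuous_on {0..} K"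
    and K_eq: "\<And>t. t \<ge> 0 \<Longrightarrow>
        K t = cinner (U t (projQ z (gen U z))) (projQ z (adj (gen_dom U) (gen U) z)) / cinner z z
            - integral {0..t} (\<lambda>s. K (t - s) *
                 (cinner (U s z) (projQ z (adj (gen_dom U) (gen U) z)) / cinner z z))"
    and eta_def: "\<And>t. \<eta> t = U t (projQ z (gen U z))
                           - integral {0..t} (\<lambda>s. cscale (K (t - s)) (U s z))"
    and G: "c0_semigroup G"
    and G_dom: "gen_dom G = {x. projQ z x \<in> cl_dom (gen_dom U) (\<lambda>x. projQ z (gen U x))}"
    and G_gen: "\<And>x. x \<in> gen_dom G \<Longrightarrow>
                  gen G x = cl_op (gen_dom U) (\<lambda>x. projQ z (gen U x)) (projQ z x)"
  shows "\<forall>t\<ge>0. \<eta> t = G t (projQ z (gen U z))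
           \<and> integral {0..t} \<eta> \<in> {x. projQ z x \<in> cl_dom (gen_dom U) (\<lambda>x. projQ z (gen U x))}
           \<and> \<eta> t = \<eta> 0 + cl_op (gen_dom U) (\<lambda>x. projQ z (gen U x)) (projQ z (integral {0..t} \<eta>))"
proof -
  interpret orthogonal_dynamics U G z
    using U G zL zLd z0 G_dom G_gen
    by (simp add: orthogonal_dynamics_def orthogonal_dynamics_axioms_def strongly_continuous_semigroup_def)
  define w where "w = projQ z (gen U z)"
  have \<eta>: "\<eta> t = G t w" if "t \<ge> 0" for t
    using G_eq_U_minus_convolution[OF K_cont K_eq that] by (simp add: eta_def w_def)
  show ?thesis
  proof (intro allI impI conjI)
    fix t :: real assume t: "t \<ge> 0"
    have integral_\<eta>: "integral {0..t} \<eta> = integral {0..t} (\<lambda>s. G s w)"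
      using \<eta> by (intro integral_cong) simp
    show "\<eta> t = G t (projQ z (gen U z))"
      using \<eta>[OF t] by (simp add: w_def)
    show "integral {0..t} \<eta> \<in> {x. projQ z x \<in> cl_dom (gen_dom U) (\<lambda>x. projQ z (gen U x))}"
      using G.gen_dom_integral_orbit[OF t] G_dom integral_\<eta> by simp
    have "cl_op (gen_dom U) (\<lambda>x. projQ z (gen U x)) (projQ z (integral {0..t} (\<lambda>s. G s w))) = G t w - w"
      using G_gen[OF G.gen_dom_integral_orbit[OF t, of w]] G.gen_integral_orbit[OF t, of w] by simp
    then show "\<eta> t = \<eta> 0 + cl_op (gen_dom U) (\<lambda>x. projQ z (gen U x)) (projQ z (integral {0..t} \<eta>))"
      using \<eta>[OF t] \<eta>[of 0] integral_\<eta> by simp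
  qed
qed

end
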